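(* Let $R$ be a commutative GPP-ring and $I$ a pure ideal of $R$. Then $R/I$ is a GPP-ring.
   Context: A commutative ring $A$ is a GPP-ring if for each $f\in A$ there exists $n\geq 1$ such that $Af^n$ is a projective $A$-module. An ideal $I$ of $R$ is pure if the canonical map $R\to R/I$ is flat; equivalently, for each $f\in I$ there exists $g\in I$ with $f(1-g)=0$. *)

theory Defs
  imports "HOL-Algebra.Algebra"
begin

definition ideal_module :: "('a, 'c) ring_scheme \<Rightarrow> 'a set \<Rightarrow> ('a, 'a) module" where
  "ideal_module R J =
     \<lparr>carrier = J, Group.monoid.mult = Group.monoid.mult R, Group.monoid.one = Group.monoid.one R, Ring.ring.zero = Ring.ring.zero R, Ring.ring.add = Ring.ring.add R,
      smult = (\<lambda>a x. a \<otimes>\<^bsub>R\<^esub> x)\<rparr>"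

text \<open>Finitely supported coefficient families indexed by the elements of M:
  the elements of the free R-module on the set carrier M.\<close>
definition free_on :: "('a, 'c) ring_scheme \<Rightarrow> ('b, 'd) ring_scheme \<Rightarrow> ('b \<Rightarrow> 'a) set" where
  "free_on R M = {\<phi>. (\<forall>m\<in>carrier M. \<phi> m \<in> carrier R) \<and> (\<forall>m. m \<notin> carrier M \<longrightarrow> \<phi> m = \<zero>\<^bsub>R\<^esub>)
                     \<and> finite {m. \<phi> m \<noteq> \<zero>\<^bsub>R\<^esub>}}"

text \<open>An R-module M is projective iff the canonical epimorphism from the free module on
  carrier M onto M, \<phi> \<mapsto> \<Sum> \<phi>(m) m, splits by an R-linear map s (i.e. M is a direct summand
  of a free module; dual basis formulation).\<close>
definition projective_module :: "('a, 'c) ring_scheme \<Rightarrow> ('a, 'b, 'd) module_scheme \<Rightarrow> bool" where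
  "projective_module R M \<longleftrightarrow> module R M \<and>
     (\<exists>s. (\<forall>x\<in>carrier M. s x \<in> free_on R M)
        \<and> (\<forall>x\<in>carrier M. \<forall>y\<in>carrier M. \<forall>m. s (x \<oplus>\<^bsub>M\<^esub> y) m = s x m \<oplus>\<^bsub>R\<^esub> s y m)
        \<and> (\<forall>a\<in>carrier R. \<forall>x\<in>carrier M. \<forall>m. s (a \<odot>\<^bsub>M\<^esub> x) m = a \<otimes>\<^bsub>R\<^esub> s x m)
        \<and> (\<forall>x\<in>carrier M. finsum M (\<lambda>m. s x m \<odot>\<^bsub>M\<^esub> m) {m. s x m \<noteq> \<zero>\<^bsub>R\<^esub>} = x))"

definition GPP_ring :: "('a, 'c) ring_scheme \<Rightarrow> bool" where
  "GPP_ring A \<longleftrightarrow> (\<forall>f\<in>carrier A. \<exists>n::nat. n \<ge> 1 \<and>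
       projective_module A (ideal_module A (PIdl\<^bsub>A\<^esub> (f [^]\<^bsub>A\<^esub> n))))"

text \<open>Pure ideal, elementwise characterization given in the paper.\<close>
definition pure_ideal :: "('a, 'c) ring_scheme \<Rightarrow> 'a set \<Rightarrow> bool" where
  "pure_ideal R I \<longleftrightarrow> ideal I R \<and>
     (\<forall>f\<in>I. \<exists>g\<in>I. f \<otimes>\<^bsub>R\<^esub> (\<one>\<^bsub>R\<^esub> \<ominus>\<^bsub>R\<^esub> g) = \<zero>\<^bsub>R\<^esub>)"

end

theory Submission
  imports Defs
begin

text \<open>A principal ideal A h is projective iff some t satisfies t h = h and Ann h \<subseteq> Ann t;
  such a t is idempotent with Ann t = Ann h, so A h \<cong> A t is a direct summand of A.
  This condition descends to R/I for a pure ideal I: if a h \<in> I, choose g \<in> I with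
  a h (1 - g) = 0; then a (1 - g) \<in> Ann h \<subseteq> Ann t, so a t = a t g \<in> I.\<close>

lemma ideal_module_simps [simp]:
  "carrier (ideal_module A J) = J"
  "Ring.ring.add (ideal_module A J) = Ring.ring.add A"
  "Ring.ring.zero (ideal_module A J) = Ring.ring.zero A"
  "Module.module.smult (ideal_module A J) = (\<lambda>a x. a \<otimes>\<^bsub>A\<^esub> x)"
  by (simp_all add: ideal_module_def)

lemma module_ideal_module:
  fixes A (structure)
  assumes "cring A" and "ideal J A"
  shows "module A (ideal_module A J)"
proof -
  interpret cring A by fact
  interpret ideal J A by fact
  have sub: "\<And>x. x \<in> J \<Longrightarrow> x \<in> carrier A" using a_subset by blast
  show ?thesis
    by (intro moduleI abelian_groupI \<open>cring A\<close>)
      (auto simp: sub a_closed I_l_closed a_ac r_neg l_distr r_distr m_assoc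
        intro!: bexI[of _ "\<ominus> x" for x] a_inv_closed)
qed

lemma finsum_ideal_module:
  fixes A (structure)
  assumes "cring A" and "ideal J A" and "finite S" and "g ` S \<subseteq> J"
  shows "finsum (ideal_module A J) g S = finsum A g S"
proof -
  interpret cring A by fact
  interpret ideal J A by fact
  interpret M: module A "ideal_module A J" using assms(1,2) by (rule module_ideal_module)
  show ?thesis
    using \<open>finite S\<close> \<open>g ` S \<subseteq> J\<close>
  proof (induction S rule: finite_induct)
    case empty
    show ?case by simp
  next
    case (insert x S)
    then have "finsum (ideal_module A J) g (insert x S) = g x \<oplus> finsum A g S"
      by (subst M.finsum_insert) auto
    also have "\<dots> = finsum A g (insert x S)"
      using insert a_subset by (subst finsum_insert) auto
    finally show ?case .
  qed
qed

definition pidl_coeff :: "('a, 'c) ring_scheme \<Rightarrow> 'a \<Rightarrow> 'a \<Rightarrow> 'a" where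
  "pidl_coeff A h x = (SOME r. r \<in> carrier A \<and> x = r \<otimes>\<^bsub>A\<^esub> h)"

lemma pidl_coeff:
  fixes A (structure)
  assumes "x \<in> PIdl h"
  shows "pidl_coeff A h x \<in> carrier A" and "pidl_coeff A h x \<otimes> h = x"
proof -
  have "\<exists>r. r \<in> carrier A \<and> x = r \<otimes> h" using assms unfolding cgenideal_def by blast
  then have "pidl_coeff A h x \<in> carrier A \<and> x = pidl_coeff A h x \<otimes> h"
    unfolding pidl_coeff_def by (rule someI_ex)
  then show "pidl_coeff A h x \<in> carrier A" and "pidl_coeff A h x \<otimes> h = x" by auto
qed

lemma finsum_cgenideal_eq_mult:
  fixes A (structure)
  assumes "cring A" and "h \<in> carrier A" and "finite S" and "S \<subseteq> PIdl h"
    and "\<And>m. c m \<in> carrier A"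
  shows "finsum A (\<lambda>m. c m \<otimes> m) S = finsum A (\<lambda>m. c m \<otimes> pidl_coeff A h m) S \<otimes> h"
proof -
  interpret cring A by fact
  have coeff: "pidl_coeff A h m \<in> carrier A" "pidl_coeff A h m \<otimes> h = m" if "m \<in> S" for m
    using pidl_coeff[where A = A and h = h and x = m] that assms(4) by auto
  have "finsum A (\<lambda>m. c m \<otimes> m) S = finsum A (\<lambda>m. (c m \<otimes> pidl_coeff A h m) \<otimes> h) S"
    using assms(2,5) coeff by (intro finsum_cong') (auto simp: m_assoc)
  also have "\<dots> = finsum A (\<lambda>m. c m \<otimes> pidl_coeff A h m) S \<otimes> h"
    using assms(2,3,5) coeff by (subst finsum_ldistr) auto
  finally show ?thesis .
qed

definition split_generator :: "('a, 'c) ring_scheme \<Rightarrow> 'a \<Rightarrow> bool" where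
  "split_generator A h \<longleftrightarrow> (\<exists>t\<in>carrier A. t \<otimes>\<^bsub>A\<^esub> h = h \<and>
     (\<forall>a\<in>carrier A. a \<otimes>\<^bsub>A\<^esub> h = \<zero>\<^bsub>A\<^esub> \<longrightarrow> a \<otimes>\<^bsub>A\<^esub> t = \<zero>\<^bsub>A\<^esub>))"

lemma annihilator_subset_mult_cong:
  fixes A (structure)
  assumes "cring A" and "h \<in> carrier A" and "t \<in> carrier A"
    and ann: "\<And>a. a \<in> carrier A \<Longrightarrow> a \<otimes> h = \<zero> \<Longrightarrow> a \<otimes> t = \<zero>"
    and "r \<in> carrier A" and "r' \<in> carrier A" and "r \<otimes> h = r' \<otimes> h"
  shows "r \<otimes> t = r' \<otimes> t"
proof -
  interpret cring A by fact
  have "(r \<ominus> r') \<otimes> h = r \<otimes> h \<ominus> r' \<otimes> h" "(r \<ominus> r') \<otimes> t = r \<otimes> t \<ominus> r' \<otimes> t"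
    using assms(2,3,5,6) by algebra+
  then have "(r \<ominus> r') \<otimes> t = \<zero>"
    using assms(2,3,5-7) by (intro ann) (simp_all add: r_right_minus_eq)
  then show ?thesis
    using \<open>(r \<ominus> r') \<otimes> t = r \<otimes> t \<ominus> r' \<otimes> t\<close> assms(3,5,6) by (simp add: r_right_minus_eq)
qed

lemma split_generator_imp_projective:
  fixes A (structure)
  assumes "cring A" and "h \<in> carrier A" and "split_generator A h"
  shows "projective_module A (ideal_module A (PIdl h))"
proof -
  interpret cring A by fact
  let ?M = "ideal_module A (PIdl h)"
  obtain t where t: "t \<in> carrier A" and th: "t \<otimes> h = h"
    and ann: "\<And>a. a \<in> carrier A \<Longrightarrow> a \<otimes> h = \<zero> \<Longrightarrow> a \<otimes> t = \<zero>"
    using assms(3) unfolding split_generator_def by blast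
  have idl: "ideal (PIdl h) A" using \<open>h \<in> carrier A\<close> by (rule cgenideal_ideal)
  interpret P: ideal "PIdl h" A by (rule idl)
  interpret M: module A ?M using \<open>cring A\<close> idl by (rule module_ideal_module)
  have h_mem: "h \<in> PIdl h" using \<open>h \<in> carrier A\<close> by (rule cgenideal_self)
  have coeff: "pidl_coeff A h x \<in> carrier A" "pidl_coeff A h x \<otimes> h = x" if "x \<in> PIdl h" for x
    using pidl_coeff[OF that] by auto
  let ?c = "\<lambda>x. pidl_coeff A h x \<otimes> t"
  have c_closed: "?c x \<in> carrier A" if "x \<in> PIdl h" for x
    using coeff[OF that] t by simp
  have c_cong: "?c x = r \<otimes> t" if "x \<in> PIdl h" "r \<in> carrier A" "r \<otimes> h = x" for x r
    by (rule annihilator_subset_mult_cong[OF assms(1,2) t ann]) (use coeff[OF that(1)] that in simp_all)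
  define s where "s x = (\<lambda>m. if m = h then ?c x else \<zero>)" for x
  show ?thesis unfolding projective_module_def
  proof (intro conjI exI[of _ s] ballI allI)
    show "module A ?M" by (rule M.module_axioms)
  next
    fix x assume "x \<in> carrier ?M"
    then show "s x \<in> free_on A ?M"
      unfolding free_on_def s_def using c_closed h_mem
      by (auto intro: finite_subset[of _ "{h}"])
  next
    fix x y m assume x: "x \<in> carrier ?M" and y: "y \<in> carrier ?M"
    have "?c (x \<oplus> y) = (pidl_coeff A h x \<oplus> pidl_coeff A h y) \<otimes> t"
      using x y coeff[of x] coeff[of y] \<open>h \<in> carrier A\<close>
      by (intro c_cong) (auto simp: l_distr P.a_closed)
    then show "s (x \<oplus>\<^bsub>?M\<^esub> y) m = s x m \<oplus> s y m"
      unfolding s_def using x y coeff[of x] coeff[of y] t by (auto simp: l_distr)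
  next
    fix a x m assume a: "a \<in> carrier A" and x: "x \<in> carrier ?M"
    have "?c (a \<otimes> x) = (a \<otimes> pidl_coeff A h x) \<otimes> t"
      using x a coeff[of x] \<open>h \<in> carrier A\<close>
      by (intro c_cong) (auto simp: m_assoc P.I_l_closed)
    then show "s (a \<odot>\<^bsub>?M\<^esub> x) m = a \<otimes> s x m"
      unfolding s_def using x a coeff[of x] t by (auto simp: m_assoc)
  next
    fix x assume x: "x \<in> carrier ?M"
    have "?c x \<otimes> h = x" using coeff[of x] x th t \<open>h \<in> carrier A\<close> by (simp add: m_assoc)
    then show "finsum ?M (\<lambda>m. s x m \<odot>\<^bsub>?M\<^esub> m) {m. s x m \<noteq> \<zero>} = x"
      using M.finsum_insert[of "{}" h "\<lambda>m. s x m \<odot>\<^bsub>?M\<^esub> m"] x h_mem c_closed[of x] P.Icarr[of x]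
        \<open>h \<in> carrier A\<close>
      by (cases "?c x = \<zero>") (auto simp: s_def)
  qed
qed

lemma projective_imp_split_generator:
  fixes A (structure)
  assumes "cring A" and "h \<in> carrier A" and "projective_module A (ideal_module A (PIdl h))"
  shows "split_generator A h"
proof -
  interpret cring A by fact
  let ?M = "ideal_module A (PIdl h)"
  have idl: "ideal (PIdl h) A" using \<open>h \<in> carrier A\<close> by (rule cgenideal_ideal)
  interpret ideal "PIdl h" A by (rule idl)
  have h_mem: "h \<in> PIdl h" using \<open>h \<in> carrier A\<close> by (rule cgenideal_self)
  obtain s where s_free: "\<forall>x\<in>carrier ?M. s x \<in> free_on A ?M"
    and s_smult: "\<forall>a\<in>carrier A. \<forall>x\<in>carrier ?M. \<forall>m. s (a \<odot>\<^bsub>?M\<^esub> x) m = a \<otimes> s x m"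
    and s_sum: "\<forall>x\<in>carrier ?M. finsum ?M (\<lambda>m. s x m \<odot>\<^bsub>?M\<^esub> m) {m. s x m \<noteq> \<zero>} = x"
    using assms(3) unfolding projective_module_def by blast
  define S where "S = {m. s h m \<noteq> \<zero>}"
  have s_h: "s h \<in> free_on A ?M" using s_free h_mem by simp
  then have "finite S" and S_sub: "S \<subseteq> PIdl h"
    unfolding S_def free_on_def by auto
  have s_closed: "s h m \<in> carrier A" for m
    using s_h unfolding free_on_def by (cases "m \<in> PIdl h") auto
  have coeff: "pidl_coeff A h x \<in> carrier A" if "x \<in> PIdl h" for x
    using pidl_coeff(1)[OF that] .
  define t where "t = finsum A (\<lambda>m. s h m \<otimes> pidl_coeff A h m) S"
  have t: "t \<in> carrier A"
    unfolding t_def using s_closed coeff S_sub by (intro finsum_closed) auto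
  have "h = finsum ?M (\<lambda>m. s h m \<otimes> m) S"
    using s_sum h_mem unfolding S_def by simp
  also have "\<dots> = finsum A (\<lambda>m. s h m \<otimes> m) S"
    using S_sub s_closed
    by (intro finsum_ideal_module[OF assms(1) idl \<open>finite S\<close>]) (auto intro: I_l_closed)
  also have "\<dots> = t \<otimes> h"
    unfolding t_def using assms(1,2) \<open>finite S\<close> S_sub s_closed by (rule finsum_cgenideal_eq_mult)
  finally have th: "t \<otimes> h = h" by simp
  have "a \<otimes> t = \<zero>" if a: "a \<in> carrier A" and ah: "a \<otimes> h = \<zero>" for a
  proof -
    have as: "a \<otimes> s h m = \<zero>" for m
    proof -
      have "a \<otimes> s h m = s (a \<otimes> h) m" using s_smult a h_mem by simp
      also have "\<dots> = s (\<zero> \<otimes> h) m" using ah \<open>h \<in> carrier A\<close> by simp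
      also have "\<dots> = \<zero>" using s_smult[rule_format, of "\<zero>" h m] h_mem s_closed by simp
      finally show ?thesis .
    qed
    have "a \<otimes> t = finsum A (\<lambda>m. (a \<otimes> s h m) \<otimes> pidl_coeff A h m) S"
      unfolding t_def using \<open>finite S\<close> S_sub s_closed coeff a
      by (subst finsum_rdistr) (auto simp: m_assoc intro!: finsum_cong')
    also have "\<dots> = finsum A (\<lambda>m. \<zero>) S"
      using S_sub coeff as by (intro finsum_cong') auto
    also have "\<dots> = \<zero>" by simp
    finally show ?thesis .
  qed
  then show ?thesis unfolding split_generator_def using t th by blast
qed

lemma projective_principal_ideal_iff:
  fixes A (structure)
  assumes "cring A" and "h \<in> carrier A"
  shows "projective_module A (ideal_module A (PIdl h)) \<longleftrightarrow> split_generator A h"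
  using projective_imp_split_generator[OF assms] split_generator_imp_projective[OF assms] by blast

lemma pure_ideal_mult_mem_transfer:
  fixes R (structure)
  assumes "cring R" and "pure_ideal R I"
    and "a \<in> carrier R" and "h \<in> carrier R" and "t \<in> carrier R"
    and ann: "\<And>b. b \<in> carrier R \<Longrightarrow> b \<otimes> h = \<zero> \<Longrightarrow> b \<otimes> t = \<zero>"
    and "a \<otimes> h \<in> I"
  shows "a \<otimes> t \<in> I"
proof -
  interpret cring R by fact
  interpret ideal I R using assms(2) unfolding pure_ideal_def by blast
  obtain g where g: "g \<in> I" and "(a \<otimes> h) \<otimes> (\<one> \<ominus> g) = \<zero>"
    using assms(2,7) unfolding pure_ideal_def by blast
  have g_carr: "g \<in> carrier R" using g by (rule Icarr)
  have "(a \<otimes> (\<one> \<ominus> g)) \<otimes> h = (a \<otimes> h) \<otimes> (\<one> \<ominus> g)"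
    using assms(3,4) g_carr by algebra
  then have "(a \<otimes> (\<one> \<ominus> g)) \<otimes> t = \<zero>"
    using \<open>(a \<otimes> h) \<otimes> (\<one> \<ominus> g) = \<zero>\<close> assms(3) g_carr by (intro ann) auto
  moreover have "(a \<otimes> (\<one> \<ominus> g)) \<otimes> t = a \<otimes> t \<ominus> (a \<otimes> t) \<otimes> g"
    using assms(3,5) g_carr by algebra
  ultimately have "a \<otimes> t = (a \<otimes> t) \<otimes> g"
    using assms(3,5) g_carr by (simp add: r_right_minus_eq)
  also have "\<dots> \<in> I" using g assms(3,5) by (simp add: I_l_closed)
  finally show ?thesis .
qed

lemma split_generator_quotient:
  fixes R (structure)
  assumes "cring R" and "pure_ideal R I" and "h \<in> carrier R" and "split_generator R h"
  shows "split_generator (R Quot I) (I +> h)"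
proof -
  interpret cring R by fact
  interpret ideal I R using assms(2) unfolding pure_ideal_def by blast
  interpret quot: ring_hom_cring R "R Quot I" "(+>) I"
    using \<open>cring R\<close> by (rule rcos_ring_hom_cring)
  obtain t where t: "t \<in> carrier R" and th: "t \<otimes> h = h"
    and ann: "\<And>a. a \<in> carrier R \<Longrightarrow> a \<otimes> h = \<zero> \<Longrightarrow> a \<otimes> t = \<zero>"
    using assms(4) unfolding split_generator_def by blast
  have quot_zero: "\<zero>\<^bsub>R Quot I\<^esub> = I" unfolding FactRing_def by (simp only: ring.simps)
  show ?thesis unfolding split_generator_def
  proof (intro bexI[of _ "I +> t"] conjI ballI impI)
    show "I +> t \<in> carrier (R Quot I)" using t by simp
    show "(I +> t) \<otimes>\<^bsub>R Quot I\<^esub> (I +> h) = I +> h"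
      using t assms(3) th by (simp flip: quot.hom_mult)
  next
    fix B assume "B \<in> carrier (R Quot I)" and "B \<otimes>\<^bsub>R Quot I\<^esub> (I +> h) = \<zero>\<^bsub>R Quot I\<^esub>"
    moreover obtain a where a: "a \<in> carrier R" and "B = I +> a"
      using \<open>B \<in> carrier (R Quot I)\<close> unfolding FactRing_def A_RCOSETS_def' by auto
    ultimately have "I +> (a \<otimes> h) = I"
      using assms(3) quot_zero by (simp flip: quot.hom_mult)
    then have "a \<otimes> h \<in> I" using a assms(3) by (intro rcos_const_imp_mem) auto
    then have "a \<otimes> t \<in> I"
      using pure_ideal_mult_mem_transfer[OF assms(1,2) a assms(3) t ann] by blast
    then show "B \<otimes>\<^bsub>R Quot I\<^esub> (I +> t) = \<zero>\<^bsub>R Quot I\<^esub>"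
      using \<open>B = I +> a\<close> a t quot_zero a_rcos_zero[OF ideal_axioms] by (simp flip: quot.hom_mult)
  qed
qed

theorem proposition2p9:
  fixes R :: "('a, 'c) ring_scheme" and I :: "'a set"
  assumes "cring R" and "GPP_ring R" and "ideal I R" and "pure_ideal R I"
  shows "GPP_ring (R Quot I)"
  unfolding GPP_ring_def
proof
  interpret quot: ring_hom_cring R "R Quot I" "(+>\<^bsub>R\<^esub>) I"
    using assms(3,1) by (rule ideal.rcos_ring_hom_cring)
  fix F assume "F \<in> carrier (R Quot I)"
  then obtain f where f: "f \<in> carrier R" and "F = I +>\<^bsub>R\<^esub> f"
    unfolding FactRing_def A_RCOSETS_def' by auto
  obtain n :: nat where "n \<ge> 1" and "projective_module R (ideal_module R (PIdl\<^bsub>R\<^esub> (f [^]\<^bsub>R\<^esub> n)))"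
    using assms(2) f unfolding GPP_ring_def by blast
  then have "split_generator R (f [^]\<^bsub>R\<^esub> n)"
    using projective_principal_ideal_iff[OF assms(1)] f by simp
  then have "split_generator (R Quot I) (I +>\<^bsub>R\<^esub> (f [^]\<^bsub>R\<^esub> n))"
    using f by (intro split_generator_quotient[OF assms(1,4)]) simp_all
  then have "split_generator (R Quot I) (F [^]\<^bsub>R Quot I\<^esub> n)"
    using \<open>F = I +>\<^bsub>R\<^esub> f\<close> f by simp
  then show "\<exists>n::nat. n \<ge> 1 \<and> projective_module (R Quot I)
      (ideal_module (R Quot I) (PIdl\<^bsub>R Quot I\<^esub> (F [^]\<^bsub>R Quot I\<^esub> n)))"
    using \<open>n \<ge> 1\<close> \<open>F \<in> carrier (R Quot I)\<close>
      projective_principal_ideal_iff[OF ideal.quotient_is_cring[OF assms(3,1)]]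
    by auto
qed

end
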